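(* Let $q$ be a prime power, $4\le n\le q$, $\alpha_1,\dots,\alpha_n\in\mathbb{F}_q$ distinct, $u_1,\dots,u_n\in\mathbb{F}_q^*$, and $H\in\mathbb{F}_q^{3\times n}$ with $H_{ab}=u_b\alpha_b^{a-1}$ (so $\ker H$ is a length-$n$ Reed–Solomon-type code of distance $4$). Then the number of $e\in\mathbb{F}_q^n$ with $|e|=2$ for which there exists $e'\in\mathbb{F}_q^n$, $e'\ne e$, $|e'|\le 2$, $He'=He$, is at most $$\frac{(n-2)(n-3)}{2(q-1)}\cdot(q-1)^2\binom{n}{2}.$$ That is, the fraction of weight-2 errors that are not the unique minimum-weight error with their syndrome is at most $\frac{(n-2)(n-3)}{2(q-1)}$.
   Context: $|e|$ denotes the Hamming weight (number of nonzero coordinates) of $e\in\mathbb{F}_q^n$. *)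

theory Defs
  imports Complex_Main "HOL-Library.Cardinality"
begin

text \<open>Vectors in F_q^n are represented as functions nat => 'a vanishing outside {0..<n};
  coordinate b (0-based) corresponds to coordinate b+1 of the paper.\<close>

definition vecs :: "nat \<Rightarrow> (nat \<Rightarrow> 'a::zero) set" where
  "vecs n = {e. \<forall>i\<ge>n. e i = 0}"

definition hweight :: "nat \<Rightarrow> (nat \<Rightarrow> 'a::zero) \<Rightarrow> nat" where
  "hweight n e = card {i. i < n \<and> e i \<noteq> 0}"

text \<open>Row a (0-based, a < 3) of H e, where H_{ab} = u_b * alpha_b^a.\<close>
definition syndrome :: "nat \<Rightarrow> (nat \<Rightarrow> 'a::field) \<Rightarrow> (nat \<Rightarrow> 'a) \<Rightarrow> (nat \<Rightarrow> 'a) \<Rightarrow> nat \<Rightarrow> 'a" where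
  "syndrome n u \<alpha> e a = (\<Sum>b<n. u b * \<alpha> b ^ a * e b)"

end

theory Submission
  imports Defs
begin

(* Any three columns of H form a Vandermonde matrix scaled by the nonzero u_b, so the kernel
   of H has minimum distance 4.  If |e| = 2 and e' ~= e with |e'| <= 2 has the same syndrome,
   then e - e' is a nonzero codeword of weight <= 4; hence |e'| = 2 and the supports of e and
   e' are disjoint.  Such an e is determined by its support P, the support Q of one such e',
   and its value at one position i of P: for two candidates sharing these data, the
   difference of the two vectors e - e' is a codeword supported in (P Un Q) - {i}, hence zero.
   Counting the triples (P, Q, value) gives C(n,2) C(n-2,2) (q-1), the stated bound. *)

definition support :: "nat \<Rightarrow> (nat \<Rightarrow> 'a::zero) \<Rightarrow> nat set" where
  "support n e = {i. i < n \<and> e i \<noteq> 0}"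

definition ambiguous_errors :: "nat \<Rightarrow> (nat \<Rightarrow> 'a::field) \<Rightarrow> (nat \<Rightarrow> 'a) \<Rightarrow> (nat \<Rightarrow> 'a) set" where
  "ambiguous_errors n u \<alpha> = {e \<in> vecs n. hweight n e = 2 \<and>
     (\<exists>e'\<in>vecs n. e' \<noteq> e \<and> hweight n e' \<le> 2 \<and>
        (\<forall>a<3. syndrome n u \<alpha> e' a = syndrome n u \<alpha> e a))}"

lemma support_subset: "support n e \<subseteq> {..<n}"
  unfolding support_def by auto

lemma finite_support [simp]: "finite (support n e)"
  using finite_subset[OF support_subset] by blast

lemma hweight_eq_card_support: "hweight n e = card (support n e)"
  unfolding hweight_def support_def ..

lemma notin_support_imp_zero: "i < n \<Longrightarrow> i \<notin> support n e \<Longrightarrow> e i = 0"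
  unfolding support_def by auto

lemma vecs_eqI:
  assumes "e \<in> vecs n" "e' \<in> vecs n" "\<And>i. i < n \<Longrightarrow> e i = e' i"
  shows "e = e'"
proof
  fix i show "e i = e' i"
    using assms unfolding vecs_def by (cases "i < n") auto
qed

lemma syndrome_diff:
  "syndrome n u \<alpha> (\<lambda>b. f b - g b) a = syndrome n u \<alpha> f a - syndrome n u \<alpha> g a"
  unfolding syndrome_def by (simp add: sum_subtractf algebra_simps)

lemma syndrome_eq_sum_over:
  assumes "support n e \<subseteq> T" "T \<subseteq> {..<n}"
  shows "syndrome n u \<alpha> e a = (\<Sum>b\<in>T. u b * \<alpha> b ^ a * e b)"
  unfolding syndrome_def
  by (rule sum.mono_neutral_right) (use assms in \<open>auto simp: support_def\<close>)

lemma vandermonde3_eq_zero: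
  fixes x1 x2 x3 y1 y2 y3 :: "'a::field"
  assumes "x1 \<noteq> x2" "x1 \<noteq> x3"
    and "y1 + y2 + y3 = 0"
    and "y1 * x1 + y2 * x2 + y3 * x3 = 0"
    and "y1 * x1^2 + y2 * x2^2 + y3 * x3^2 = 0"
  shows "y1 = 0"
proof -
  have "y1 * ((x1 - x2) * (x1 - x3)) =
      (y1 * x1^2 + y2 * x2^2 + y3 * x3^2) - (x2 + x3) * (y1 * x1 + y2 * x2 + y3 * x3)
      + x2 * x3 * (y1 + y2 + y3)"
    by (simp add: algebra_simps power2_eq_square)
  also have "\<dots> = 0" using assms(3-5) by simp
  finally show ?thesis using assms(1,2) by simp
qed

lemma codeword_weight_le_3_eq_zero:
  fixes \<alpha> u c :: "nat \<Rightarrow> 'a::field"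
  assumes "3 \<le> n" "inj_on \<alpha> {..<n}" "\<forall>b<n. u b \<noteq> 0"
    and "\<forall>a<3. syndrome n u \<alpha> c a = 0"
    and "card (support n c) \<le> 3"
    and "i < n"
  shows "c i = 0"
proof -
  have "3 \<le> card {..<n}" using assms(1) by simp
  then obtain T where T: "support n c \<subseteq> T" "T \<subseteq> {..<n}" "card T = 3"
    using exists_subset_between[OF assms(5) _ support_subset finite_lessThan] by blast
  then obtain j k l where jkl: "T = {j, k, l}" "j \<noteq> k" "k \<noteq> l" "j \<noteq> l"
    by (metis card_3_iff)
  have n: "j < n" "k < n" "l < n" using T(2) jkl(1) by auto
  then have distinct: "\<alpha> j \<noteq> \<alpha> k" "\<alpha> k \<noteq> \<alpha> l" "\<alpha> j \<noteq> \<alpha> l"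
    using inj_onD[OF assms(2)] jkl(2-4) by (metis lessThan_iff)+
  define y where "y b = u b * c b" for b
  have row: "y j * \<alpha> j ^ a + y k * \<alpha> k ^ a + y l * \<alpha> l ^ a = 0" if "a < 3" for a
  proof -
    have "syndrome n u \<alpha> c a = y j * \<alpha> j ^ a + y k * \<alpha> k ^ a + y l * \<alpha> l ^ a"
      using syndrome_eq_sum_over[OF T(1,2)] jkl by (simp add: y_def ac_simps)
    then show ?thesis using assms(4) that by simp
  qed
  have "y j = 0"
    using vandermonde3_eq_zero[of "\<alpha> j" "\<alpha> k" "\<alpha> l" "y j" "y k" "y l"]
      row[of 0] row[of 1] row[of 2] distinct by simp
  moreover have "y k = 0"
    using vandermonde3_eq_zero[of "\<alpha> k" "\<alpha> j" "\<alpha> l" "y k" "y j" "y l"]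
      row[of 0] row[of 1] row[of 2] distinct by (simp add: ac_simps)
  moreover have "y l = 0"
    using vandermonde3_eq_zero[of "\<alpha> l" "\<alpha> j" "\<alpha> k" "y l" "y j" "y k"]
      row[of 0] row[of 1] row[of 2] distinct by (simp add: ac_simps)
  ultimately have "c b = 0" if "b \<in> T" for b
    using that jkl(1) n assms(3) by (auto simp: y_def)
  then show ?thesis using T(1) assms(6) notin_support_imp_zero by blast
qed

lemma same_syndrome_disjoint_support:
  fixes \<alpha> u e e' :: "nat \<Rightarrow> 'a::field"
  assumes "3 \<le> n" "inj_on \<alpha> {..<n}" "\<forall>b<n. u b \<noteq> 0"
    and "e \<in> vecs n" "hweight n e = 2"
    and "e' \<in> vecs n" "e' \<noteq> e" "hweight n e' \<le> 2"
    and "\<forall>a<3. syndrome n u \<alpha> e' a = syndrome n u \<alpha> e a"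
  shows "support n e \<inter> support n e' = {}" "card (support n e') = 2"
proof -
  define c where "c b = e b - e' b" for b
  have syn: "\<forall>a<3. syndrome n u \<alpha> c a = 0"
    using assms(9) unfolding c_def syndrome_diff by simp
  have "\<not> (\<forall>i<n. e i = e' i)"
    using vecs_eqI[OF assms(4,6)] assms(7) by blast
  then obtain i where i: "i < n" "c i \<noteq> 0" unfolding c_def by auto
  have "4 \<le> card (support n c)"
  proof (rule ccontr)
    assume "\<not> 4 \<le> card (support n c)"
    then have "c i = 0" using codeword_weight_le_3_eq_zero[OF assms(1-3) syn _ i(1)] by simp
    with i(2) show False ..
  qed
  also have "\<dots> \<le> card (support n e \<union> support n e')"
    by (rule card_mono) (auto simp: support_def c_def)
  finally have "4 \<le> card (support n e \<union> support n e')" .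
  moreover have "card (support n e \<union> support n e') + card (support n e \<inter> support n e') =
      card (support n e) + card (support n e')"
    using card_Un_Int[of "support n e" "support n e'"] by simp
  ultimately have "card (support n e \<inter> support n e') = 0" "card (support n e') = 2"
    using assms(5,8) unfolding hweight_eq_card_support by linarith+
  then show "support n e \<inter> support n e' = {}" "card (support n e') = 2"
    by simp_all
qed

lemma same_syndrome_error_determined:
  fixes \<alpha> u e1 e2 e1' e2' :: "nat \<Rightarrow> 'a::field"
  assumes "3 \<le> n" "inj_on \<alpha> {..<n}" "\<forall>b<n. u b \<noteq> 0"
    and "e1 \<in> vecs n" "e2 \<in> vecs n"
    and "\<forall>a<3. syndrome n u \<alpha> e1' a = syndrome n u \<alpha> e1 a"
    and "\<forall>a<3. syndrome n u \<alpha> e2' a = syndrome n u \<alpha> e2 a"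
    and P: "support n e1 = P" "support n e2 = P"
    and Q: "support n e1' = Q" "support n e2' = Q"
    and "P \<inter> Q = {}" "card P \<le> 2" "card Q \<le> 2"
    and "i \<in> P" "e1 i = e2 i"
  shows "e1 = e2"
proof -
  have zero: "e b = 0" if "b < n" "support n e = S" "b \<notin> S" for e :: "nat \<Rightarrow> 'a" and b S
    using that notin_support_imp_zero by blast
  define d where "d b = (e1 b - e1' b) - (e2 b - e2' b)" for b
  have "\<forall>a<3. syndrome n u \<alpha> d a = 0"
    using assms(6,7) unfolding d_def syndrome_diff by simp
  moreover have "support n d \<subseteq> (P \<union> Q) - {i}"
  proof
    fix b assume b: "b \<in> support n d"
    then have "b < n" "d b \<noteq> 0" unfolding support_def by auto
    moreover have "i < n" "i \<notin> Q" using assms(12,15) support_subset[of n e1] P(1) by auto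
    then have "d i = 0" using assms(16) zero[OF _ Q(1)] zero[OF _ Q(2)] unfolding d_def by simp
    ultimately show "b \<in> (P \<union> Q) - {i}"
      using zero[OF _ P(1)] zero[OF _ P(2)] zero[OF _ Q(1)] zero[OF _ Q(2)]
      unfolding d_def by force
  qed
  moreover have "card ((P \<union> Q) - {i}) \<le> 3"
  proof -
    have "finite P" "finite Q" using P(1) Q(1) by auto
    then have "card (P \<union> Q) \<le> 4" using card_Un_le[of P Q] assms(13,14) by linarith
    then show ?thesis using \<open>finite P\<close> \<open>finite Q\<close> assms(15) by simp
  qed
  moreover have "finite ((P \<union> Q) - {i})" using P(1) Q(1) by auto
  ultimately have "card (support n d) \<le> 3" by (meson card_mono order_trans)
  then have d0: "d b = 0" if "b < n" for b
    using codeword_weight_le_3_eq_zero[OF assms(1-3) \<open>\<forall>a<3. syndrome n u \<alpha> d a = 0\<close>] that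
    by blast
  show "e1 = e2"
  proof (rule vecs_eqI[OF assms(4,5)])
    fix b assume "b < n"
    show "e1 b = e2 b"
    proof (cases "b \<in> P")
      case True
      then have "e1' b = 0" "e2' b = 0"
        using assms(12) zero[OF \<open>b < n\<close> Q(1)] zero[OF \<open>b < n\<close> Q(2)] by auto
      then show ?thesis using d0[OF \<open>b < n\<close>] unfolding d_def by simp
    qed (use zero[OF \<open>b < n\<close> P(1)] zero[OF \<open>b < n\<close> P(2)] in auto)
  qed
qed

lemma card_disjoint_subset_pairs:
  assumes "finite A"
  shows "card (SIGMA P:{P. P \<subseteq> A \<and> card P = k}. {Q. Q \<subseteq> A - P \<and> card Q = l}) =
    (card A choose k) * ((card A - k) choose l)"
proof -
  have "card {Q. Q \<subseteq> A - P \<and> card Q = l} = (card A - k) choose l"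
    if "P \<subseteq> A" "card P = k" for P
    using n_subsets[of "A - P" l] card_Diff_subset[of P A] finite_subset[OF that(1)] assms that
    by simp
  then show ?thesis
    using assms n_subsets[of A k] by (simp add: card_SigmaI)
qed

lemma card_ambiguous_errors_le:
  fixes \<alpha> u :: "nat \<Rightarrow> 'a::{finite,field}"
  assumes "3 \<le> n" "inj_on \<alpha> {..<n}" "\<forall>b<n. u b \<noteq> 0"
  shows "card (ambiguous_errors n u \<alpha>) \<le> (n choose 2) * ((n - 2) choose 2) * (CARD('a) - 1)"
proof -
  define B where "B = ambiguous_errors n u \<alpha>"
  define confusable where "confusable e e' \<longleftrightarrow>
      e' \<in> vecs n \<and> e' \<noteq> e \<and> hweight n e' \<le> 2 \<and>
      (\<forall>a<3. syndrome n u \<alpha> e' a = syndrome n u \<alpha> e a)" for e e' :: "nat \<Rightarrow> 'a"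
  have "\<forall>e\<in>B. \<exists>e'. confusable e e'"
    unfolding B_def ambiguous_errors_def confusable_def by blast
  then have "\<exists>W. \<forall>e\<in>B. confusable e (W e)" by (rule bchoice)
  then obtain W where W: "\<And>e. e \<in> B \<Longrightarrow> confusable e (W e)" by blast
  have B: "e \<in> vecs n" "card (support n e) = 2" if "e \<in> B" for e
    using that unfolding B_def ambiguous_errors_def hweight_eq_card_support by auto
  have companion: "support n e \<inter> support n (W e) = {}" "card (support n (W e)) = 2"
    if "e \<in> B" for e
    using same_syndrome_disjoint_support[OF assms, of e "W e"] W[OF that] B[OF that]
    unfolding confusable_def hweight_eq_card_support by auto
  define f where "f e = ((support n e, support n (W e)), e (Min (support n e)))" for e
  define PQ where
    "PQ = (SIGMA P:{P. P \<subseteq> {..<n} \<and> card P = 2}. {Q. Q \<subseteq> {..<n} - P \<and> card Q = 2})"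
  have Min_in_support: "Min (support n e) \<in> support n e" if "e \<in> B" for e
    using B(2)[OF that] by (intro Min_in) auto
  have "f ` B \<subseteq> PQ \<times> (UNIV - {0})"
  proof
    fix x assume "x \<in> f ` B"
    then obtain e where "e \<in> B" "x = f e" by blast
    then show "x \<in> PQ \<times> (UNIV - {0})"
      using B companion support_subset Min_in_support[of e]
      unfolding f_def PQ_def support_def by auto
  qed
  moreover have "inj_on f B"
  proof (rule inj_onI)
    fix e1 e2 assume e: "e1 \<in> B" "e2 \<in> B" and "f e1 = f e2"
    then have "support n e2 = support n e1" "support n (W e2) = support n (W e1)"
      "e1 (Min (support n e1)) = e2 (Min (support n e1))"
      unfolding f_def by auto
    with e show "e1 = e2"
      using same_syndrome_error_determined[OF assms B(1)[OF e(1)] B(1)[OF e(2)],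
          of "W e1" "W e2" "support n e1" "support n (W e1)" "Min (support n e1)"]
        B(2) companion Min_in_support W unfolding confusable_def by auto
  qed
  moreover have "PQ \<subseteq> Pow {..<n} \<times> Pow {..<n}"
    unfolding PQ_def by auto
  then have "finite PQ" by (rule finite_subset) simp
  ultimately have "card B \<le> card (PQ \<times> (UNIV - {0 :: 'a}))"
    by (intro card_inj_on_le) auto
  also have "\<dots> = (n choose 2) * ((n - 2) choose 2) * (CARD('a) - 1)"
    unfolding PQ_def card_cartesian_product card_disjoint_subset_pairs[OF finite_lessThan]
    by (simp add: card_Diff_singleton)
  finally show ?thesis unfolding B_def .
qed

lemma of_nat_choose_two:
  "(of_nat (m choose 2) :: 'a::field_char_0) = of_nat m * (of_nat m - 1) / 2"
proof -
  have "even (m * (m - 1))" by auto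
  then have "2 * (m choose 2) = m * (m - 1)" by (simp add: choose_two)
  then have "2 * (of_nat (m choose 2) :: 'a) = of_nat m * of_nat (m - 1)"
    by (metis of_nat_mult of_nat_numeral)
  then show ?thesis by (cases m) (simp_all add: field_simps)
qed

theorem mainTheorem9:
  fixes \<alpha> u :: "nat \<Rightarrow> 'a::{finite,field}" and n :: nat
  assumes "4 \<le> n" and "n \<le> CARD('a)"
    and "inj_on \<alpha> {..<n}"
    and "\<forall>b<n. u b \<noteq> 0"
  shows "real (card {e \<in> vecs n. hweight n e = 2 \<and>
            (\<exists>e'\<in>vecs n. e' \<noteq> e \<and> hweight n e' \<le> 2 \<and>
               (\<forall>a<3. syndrome n u \<alpha> e' a = syndrome n u \<alpha> e a))})
         \<le> (real (n - 2) * real (n - 3)) / (2 * (real CARD('a) - 1))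
            * (real CARD('a) - 1)^2 * real (n choose 2)"
proof -
  let ?q = "real CARD('a)"
  have "card (ambiguous_errors n u \<alpha>) \<le> (n choose 2) * ((n - 2) choose 2) * (CARD('a) - 1)"
    using card_ambiguous_errors_le[OF _ assms(3,4)] assms(1) by simp
  then have "real (card (ambiguous_errors n u \<alpha>)) \<le>
      real ((n choose 2) * ((n - 2) choose 2) * (CARD('a) - 1))"
    by (rule of_nat_mono)
  also have "\<dots> = real (n choose 2) * (real (n - 2) * real (n - 3) / 2) * (?q - 1)"
    using assms(1,2) by (simp add: of_nat_choose_two of_nat_diff)
  also have "\<dots> = (real (n - 2) * real (n - 3)) / (2 * (?q - 1)) * (?q - 1)^2 * real (n choose 2)"
    using assms(1,2) by (simp add: field_simps power2_eq_square)
  finally show ?thesis unfolding ambiguous_errors_def .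
qed

end
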